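(* For every $k\ge1$ and every $g\in B_k$, we have $g^2\in B_k'$.
   Context: Let $C_2=\{e,\sigma\}$ with $\sigma=(1,2)$. Define $B_1=C_2$ and $B_k=B_{k-1}\wr C_2$ for $k>1$ (the iterated permutational wreath product of $k$ copies of $C_2$, isomorphic to a Sylow $2$-subgroup of $S_{2^k}$), with elements written as wreath recursions $(g_1,g_2)\pi$, $g_1,g_2\in B_{k-1}$, $\pi\in C_2$, and multiplication $(g_1,g_2)\pi\cdot(h_1,h_2)\rho=(g_1h_{\pi(1)},g_2h_{\pi(2)})\pi\rho$. *)

theory Defs
  imports "HOL-Algebra.Algebra"
begin

text \<open>Elements of the iterated wreath product are represented by wreath recursions:
  a binary tree whose inner nodes are labelled by an element of C_2
  (False = identity e, True = the transposition sigma = (1 2)).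
  Wr g1 g2 p stands for (g1,g2)pi, where pi = sigma iff p.\<close>

datatype wr = WLeaf | Wr wr wr bool

text \<open>B_0 is the trivial group; B_k = B_(k-1) wr C_2, so B_1 = C_2.\<close>
fun wr_set :: "nat \<Rightarrow> wr set" where
  "wr_set 0 = {WLeaf}"
| "wr_set (Suc k) = {Wr g1 g2 p | g1 g2 p. g1 \<in> wr_set k \<and> g2 \<in> wr_set k}"

fun wr_one :: "nat \<Rightarrow> wr" where
  "wr_one 0 = WLeaf"
| "wr_one (Suc k) = Wr (wr_one k) (wr_one k) False"

text \<open>(g1,g2)pi * (h1,h2)rho = (g1 h_pi(1), g2 h_pi(2)) pi rho.\<close>
fun wr_mult :: "wr \<Rightarrow> wr \<Rightarrow> wr" where
  "wr_mult (Wr g1 g2 p) (Wr h1 h2 q) =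
     Wr (wr_mult g1 (if p then h2 else h1)) (wr_mult g2 (if p then h1 else h2)) (p \<noteq> q)"
| "wr_mult _ _ = WLeaf"

definition B :: "nat \<Rightarrow> wr monoid" where
  "B k = \<lparr>carrier = wr_set k, monoid.mult = wr_mult, one = wr_one k\<rparr>"

end

theory Submission
  imports Defs
begin

text \<open>For g = (g1, g2) the square (g1^2, g2^2) is a product of images of
  squares of B_(k-1) under the two coordinate embeddings, which are homomorphisms and so map
  B_(k-1)' into B_k'. For g = (g1, g2)\<sigma> the square is (h, g2 g1) with h = g1 g2; it factors as
  (h, h^-1), the commutator of (h, 1) and \<sigma>, times (1, h g2 g1), and
  h g2 g1 = g1 g2^2 g1^-1 \<cdot> g1^2 lies in B_(k-1)' by induction and normality.\<close>

fun wr_inv :: "wr \<Rightarrow> wr" where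
  "wr_inv (Wr g1 g2 p) = Wr (wr_inv (if p then g2 else g1)) (wr_inv (if p then g1 else g2)) p"
| "wr_inv WLeaf = WLeaf"

lemma Wr_mem_wr_set_Suc [simp]:
  "Wr x y p \<in> wr_set (Suc k) \<longleftrightarrow> x \<in> wr_set k \<and> y \<in> wr_set k"
  by simp

lemma wr_mult_closed: "x \<in> wr_set k \<Longrightarrow> y \<in> wr_set k \<Longrightarrow> wr_mult x y \<in> wr_set k"
  by (induction k arbitrary: x y) auto

lemma wr_one_mem: "wr_one k \<in> wr_set k"
  by (induction k) auto

lemma wr_inv_mem: "x \<in> wr_set k \<Longrightarrow> wr_inv x \<in> wr_set k"
  by (induction k arbitrary: x) auto

lemma wr_mult_assoc:
  "x \<in> wr_set k \<Longrightarrow> y \<in> wr_set k \<Longrightarrow> z \<in> wr_set k \<Longrightarrow>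
   wr_mult (wr_mult x y) z = wr_mult x (wr_mult y z)"
  by (induction k arbitrary: x y z) auto

lemma wr_mult_one_left: "x \<in> wr_set k \<Longrightarrow> wr_mult (wr_one k) x = x"
  by (induction k arbitrary: x) auto

lemma wr_mult_one_right: "x \<in> wr_set k \<Longrightarrow> wr_mult x (wr_one k) = x"
  by (induction k arbitrary: x) auto

lemma wr_inv_one: "wr_inv (wr_one k) = wr_one k"
  by (induction k) auto

lemma wr_mult_inv_left: "x \<in> wr_set k \<Longrightarrow> wr_mult (wr_inv x) x = wr_one k"
  by (induction k arbitrary: x) auto

lemma carrier_B [simp]: "carrier (B k) = wr_set k"
  and mult_B [simp]: "x \<otimes>\<^bsub>B k\<^esub> y = wr_mult x y"
  and one_B [simp]: "\<one>\<^bsub>B k\<^esub> = wr_one k"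
  by (simp_all add: B_def)

lemma group_B: "group (B k)"
  by (rule groupI)
    (auto simp: wr_mult_closed wr_one_mem wr_mult_assoc wr_mult_one_left
          intro: wr_inv_mem wr_mult_inv_left)

lemma inv_B [simp]: "x \<in> wr_set k \<Longrightarrow> inv\<^bsub>B k\<^esub> x = wr_inv x"
proof -
  assume x: "x \<in> wr_set k"
  interpret group "B k" by (rule group_B)
  show ?thesis by (rule inv_equality) (simp_all add: x wr_mult_inv_left wr_inv_mem)
qed

definition wr_left :: "nat \<Rightarrow> wr \<Rightarrow> wr" where
  "wr_left k x = Wr x (wr_one k) False"

definition wr_right :: "nat \<Rightarrow> wr \<Rightarrow> wr" where
  "wr_right k x = Wr (wr_one k) x False"

lemma group_hom_wr_left: "group_hom (B k) (B (Suc k)) (wr_left k)"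
  by (intro group_hom.intro group_hom_axioms.intro group_B homI)
    (auto simp: wr_left_def wr_one_mem wr_mult_one_left)

lemma group_hom_wr_right: "group_hom (B k) (B (Suc k)) (wr_right k)"
  by (intro group_hom.intro group_hom_axioms.intro group_B homI)
    (auto simp: wr_right_def wr_one_mem wr_mult_one_left)

lemma (in group_hom) derived_image_subset:
  "h ` derived G (carrier G) \<subseteq> derived H (carrier H)"
  using derived_img[of "carrier G"] H.mono_derived[of "h ` carrier G" "carrier H"] by force

lemma (in group) commutator_mem_derived:
  "a \<in> carrier G \<Longrightarrow> b \<in> carrier G \<Longrightarrow>
   a \<otimes> b \<otimes> inv a \<otimes> inv b \<in> derived G (carrier G)"
  unfolding derived_def by (rule generate.incl) blast

lemma (in normal) mult_square_mult_mem:
  assumes "x \<in> carrier G" "y \<in> carrier G" "x \<otimes> x \<in> H" "y \<otimes> y \<in> H"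
  shows "x \<otimes> (y \<otimes> y) \<otimes> x \<in> H"
proof -
  have "x \<otimes> (y \<otimes> y) \<otimes> x = (x \<otimes> (y \<otimes> y) \<otimes> inv x) \<otimes> (x \<otimes> x)"
    using assms(1,2) by (simp add: m_assoc flip: m_assoc[of "inv x" x x])
  then show ?thesis
    using assms inv_op_closed2 by auto
qed

abbreviation derived_B :: "nat \<Rightarrow> wr set" where
  "derived_B k \<equiv> derived (B k) (carrier (B k))"

lemma derived_B_mult_closed:
  "x \<in> derived_B k \<Longrightarrow> y \<in> derived_B k \<Longrightarrow> wr_mult x y \<in> derived_B k"
  using subgroup.m_closed[OF group.derived_is_subgroup[OF group_B]] by fastforce

lemma wr_left_mem_derived_B: "x \<in> derived_B k \<Longrightarrow> wr_left k x \<in> derived_B (Suc k)"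
  using group_hom.derived_image_subset[OF group_hom_wr_left] by blast

lemma wr_right_mem_derived_B: "x \<in> derived_B k \<Longrightarrow> wr_right k x \<in> derived_B (Suc k)"
  using group_hom.derived_image_subset[OF group_hom_wr_right] by blast

lemma Wr_inv_mem_derived_B:
  assumes h: "h \<in> wr_set k"
  shows "Wr h (wr_inv h) False \<in> derived_B (Suc k)"
proof -
  interpret group "B (Suc k)" by (rule group_B)
  let ?\<sigma> = "Wr (wr_one k) (wr_one k) True"
  have "Wr h (wr_inv h) False =
      wr_left k h \<otimes>\<^bsub>B (Suc k)\<^esub> ?\<sigma> \<otimes>\<^bsub>B (Suc k)\<^esub>
      inv\<^bsub>B (Suc k)\<^esub> (wr_left k h) \<otimes>\<^bsub>B (Suc k)\<^esub> inv\<^bsub>B (Suc k)\<^esub> ?\<sigma>"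
    using h by (simp add: wr_left_def wr_one_mem wr_inv_mem wr_inv_one wr_mult_one_left
        wr_mult_one_right del: wr_set.simps)
  also have "\<dots> \<in> derived_B (Suc k)"
    by (rule commutator_mem_derived) (simp_all add: wr_left_def h wr_one_mem del: wr_set.simps)
  finally show ?thesis .
qed

lemma square_mem_derived_B: "g \<in> wr_set k \<Longrightarrow> wr_mult g g \<in> derived_B k"
proof (induction k arbitrary: g)
  case 0
  interpret group "B 0" by (rule group_B)
  from 0 have "wr_mult g g = \<one>\<^bsub>B 0\<^esub>" by simp
  then show ?case using subgroup.one_closed[OF derived_is_subgroup] by simp
next
  case (Suc k)
  obtain g1 g2 p where g: "g = Wr g1 g2 p" "g1 \<in> wr_set k" "g2 \<in> wr_set k"
    using Suc.prems by auto
  show ?case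
  proof (cases p)
    case False
    then have "wr_mult g g = wr_mult (wr_left k (wr_mult g1 g1)) (wr_right k (wr_mult g2 g2))"
      using g by (simp add: wr_left_def wr_right_def wr_mult_one_left wr_mult_one_right
          wr_mult_closed)
    then show ?thesis
      using derived_B_mult_closed wr_left_mem_derived_B wr_right_mem_derived_B Suc.IH g
      by metis
  next
    case True
    define h where "h = wr_mult g1 g2"
    have h: "h \<in> wr_set k" using g by (simp add: h_def wr_mult_closed)
    interpret Bk: group "B k" by (rule group_B)
    have "g1 \<otimes>\<^bsub>B k\<^esub> (g2 \<otimes>\<^bsub>B k\<^esub> g2) \<otimes>\<^bsub>B k\<^esub> g1 \<in> derived_B k"
      by (rule normal.mult_square_mult_mem[OF Bk.derived_self_is_normal])
        (use g Suc.IH in simp_all)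
    then have "wr_right k (wr_mult h (wr_mult g2 g1)) \<in> derived_B (Suc k)"
      using g by (intro wr_right_mem_derived_B) (simp add: h_def wr_mult_assoc wr_mult_closed)
    moreover have "wr_mult (wr_inv h) (wr_mult h (wr_mult g2 g1)) = wr_mult g2 g1"
      using g h wr_mult_assoc[of "wr_inv h" k h "wr_mult g2 g1"]
      by (simp add: wr_mult_inv_left wr_mult_one_left wr_inv_mem wr_mult_closed)
    then have "wr_mult g g =
        wr_mult (Wr h (wr_inv h) False) (wr_right k (wr_mult h (wr_mult g2 g1)))"
      using g h True by (simp add: wr_right_def wr_mult_one_right flip: h_def)
    ultimately show ?thesis
      using derived_B_mult_closed Wr_inv_mem_derived_B[OF h] by metis
  qed
qed

theorem mainTheorem15:
  fixes k :: nat and g :: wr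
  assumes "k \<ge> 1" and "g \<in> carrier (B k)"
  shows "g \<otimes>\<^bsub>B k\<^esub> g \<in> derived (B k) (carrier (B k))"
  using square_mem_derived_B assms(2) by simp

end
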